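(* Let $a,b\in(0,1]$ with $a+b\leq1$. Define on $[0,1)$ $$h(x)=\frac{(ab)^2}{(a+b)(a+b+1)}(1-x)\,{}_2F_1(a+1,b+1;a+b+2;x)+\frac{ab}{a+b}\,{}_2F_1(a,b;a+b+1;x),$$ $$g(x)=-\Big(\frac{2ab}{a+b}\,{}_2F_1(a,b;a+b+1;x)+{}_2F_1(a,b;a+b;x)\Big),\qquad \Delta(x)=g(x)^2-8h(x)\,{}_2F_1(a,b;a+b;x),$$ $$\varphi_\pm(x)=\log(1-x)+\frac{-g(x)\pm\sqrt{\Delta(x)}}{2h(x)},$$ and $\alpha_0=\max_{[0,1)}\varphi_+$, $\delta_-=\max_{[0,1)}\varphi_-$, $\delta_+=\min_{[0,1)}\varphi_+$. If $c\in[\delta_-,\delta_+]$, then for all $x\in(0,1)$ $$\frac1c+\frac1{B(a,b)}\leq\frac{{}_2F_1(a,b;a+b;x)}{c-\log(1-x)}+\frac{{}_2F_1(a,b;a+b;1-x)}{c-\log x}\leq\frac{2\,{}_2F_1(a,b;a+b;1/2)}{c+\log2}.$$ If $c\geq\alpha_0$, then the reversed inequalities hold.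
   Context: ${}_2F_1$ is the Gauss hypergeometric function; $B(a,b)=\Gamma(a)\Gamma(b)/\Gamma(a+b)$. *)

theory Defs
  imports "HOL-Analysis.Analysis"
begin

definition hyp2F1 :: "real \<Rightarrow> real \<Rightarrow> real \<Rightarrow> real \<Rightarrow> real" where
  "hyp2F1 a b c x =
     (\<Sum>n. pochhammer a n * pochhammer b n / (pochhammer c n * fact n) * x ^ n)"

definition hfun :: "real \<Rightarrow> real \<Rightarrow> real \<Rightarrow> real" where
  "hfun a b x = (a*b)^2 / ((a+b)*(a+b+1)) * (1-x) * hyp2F1 (a+1) (b+1) (a+b+2) x
               + a*b/(a+b) * hyp2F1 a b (a+b+1) x"

definition gfun :: "real \<Rightarrow> real \<Rightarrow> real \<Rightarrow> real" where
  "gfun a b x = - (2*a*b/(a+b) * hyp2F1 a b (a+b+1) x + hyp2F1 a b (a+b) x)"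

definition Deltafun :: "real \<Rightarrow> real \<Rightarrow> real \<Rightarrow> real" where
  "Deltafun a b x = (gfun a b x)^2 - 8 * hfun a b x * hyp2F1 a b (a+b) x"

definition phi_plus :: "real \<Rightarrow> real \<Rightarrow> real \<Rightarrow> real" where
  "phi_plus a b x = ln (1-x) + (- gfun a b x + sqrt (Deltafun a b x)) / (2 * hfun a b x)"

definition phi_minus :: "real \<Rightarrow> real \<Rightarrow> real \<Rightarrow> real" where
  "phi_minus a b x = ln (1-x) + (- gfun a b x - sqrt (Deltafun a b x)) / (2 * hfun a b x)"

text \<open>The paper's maxima/minimum over [0,1) (which it asserts are attained),
  rendered as supremum/infimum.\<close>
definition alpha0 :: "real \<Rightarrow> real \<Rightarrow> real" where
  "alpha0 a b = (SUP x\<in>{0..<1}. phi_plus a b x)"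

definition delta_minus :: "real \<Rightarrow> real \<Rightarrow> real" where
  "delta_minus a b = (SUP x\<in>{0..<1}. phi_minus a b x)"

definition delta_plus :: "real \<Rightarrow> real \<Rightarrow> real" where
  "delta_plus a b = (INF x\<in>{0..<1}. phi_plus a b x)"

end

theory Submission
  imports Defs "HOL-Real_Asymp.Real_Asymp"
begin

text \<open>
  Write F for 2F1(a, b; a + b; x) and u(x) = F(x) / (c - log (1 - x)). The derivative formula
  F' = k 2F1(a + 1, b + 1; a + b + 1) with k = ab/(a + b), the contiguous relation
  (1 - x) F' = k 2F1(a, b; a + b + 1) and its derivative give h = (1 - x)^2 F'' and
  g = -(2 (1 - x) F' + F). Hence u'' has the sign of Q(t) = h t^2 + g t + 2 F at
  t = c - log (1 - x), whose roots are exactly the two values phi_\<plusminus>(x) - log (1 - x).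
  So u is concave for c \<in> [delta_-, delta_+] and convex for c \<ge> alpha_0, and accordingly the
  symmetric sum v(x) = u(x) + u(1 - x) is monotone on (0, 1/2]: it lies between its limit
  1/c + 1/B(a, b) at 0 and its value at 1/2.

  The limit, and the finiteness of the extrema of phi_\<plusminus>, come from the behaviour at x = 1:
  the sequence n A_n of scaled coefficients of F increases to 1/B(a, b) at rate O(1/n), whence
  F(x) = - log (1 - x) / B(a, b) + O(1) and h(x) = 1/B(a, b) + O(1 / log (1 - x)).
\<close>

section \<open>Hypergeometric series with positive parameters\<close>

definition hyp2F1_coeff :: "real \<Rightarrow> real \<Rightarrow> real \<Rightarrow> nat \<Rightarrow> real" where
  "hyp2F1_coeff a b c n = pochhammer a n * pochhammer b n / (pochhammer c n * fact n)"

lemma hyp2F1_altdef: "hyp2F1 a b c x = (\<Sum>n. hyp2F1_coeff a b c n * x ^ n)"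
  unfolding hyp2F1_def hyp2F1_coeff_def ..

lemma hyp2F1_coeff_0 [simp]: "hyp2F1_coeff a b c 0 = 1"
  by (simp add: hyp2F1_coeff_def)

lemma hyp2F1_coeff_Suc:
  "hyp2F1_coeff a b c (Suc n) = hyp2F1_coeff a b c n * ((a + n) * (b + n) / ((c + n) * (n + 1)))"
  unfolding hyp2F1_coeff_def pochhammer_Suc fact_Suc by (simp add: times_divide_times_eq ac_simps)

lemma hyp2F1_coeff_pos: "0 < a \<Longrightarrow> 0 < b \<Longrightarrow> 0 < c \<Longrightarrow> 0 < hyp2F1_coeff a b c n"
  by (simp add: hyp2F1_coeff_def pochhammer_pos)

lemma diffs_hyp2F1_coeff:
  "diffs (hyp2F1_coeff a b c) n = a * b / c * hyp2F1_coeff (a + 1) (b + 1) (c + 1) n"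
  unfolding diffs_def hyp2F1_coeff_def pochhammer_rec fact_Suc by (simp add: times_divide_times_eq ac_simps)

lemma hyp2F1_coeff_shift_c:
  assumes "0 < c"
  shows "hyp2F1_coeff a b (c + 1) n = hyp2F1_coeff a b c n * (c / (c + n))"
proof -
  have shift: "pochhammer (c + 1) n = pochhammer c n * (c + n) / c"
    using pochhammer_rec[of c n] pochhammer_Suc[of c n] assms by (simp add: field_simps)
  have "0 < pochhammer c n" "0 < c + n"
    using assms by (simp_all add: pochhammer_pos)
  then show ?thesis
    using assms unfolding hyp2F1_coeff_def shift by (simp add: divide_simps)
qed

lemma conv_radius_hyp2F1_coeff:
  assumes "0 < a" "0 < b" "0 < c"
  shows "conv_radius (hyp2F1_coeff a b c) = 1"
proof (rule conv_radius_ratio_limit_nonzero)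
  have "norm (hyp2F1_coeff a b c n) / norm (hyp2F1_coeff a b c (Suc n))
          = inverse ((a + n) * (b + n) / ((c + n) * (n + 1)))" for n
    using hyp2F1_coeff_pos[OF assms, of n] assms by (simp add: hyp2F1_coeff_Suc)
  moreover have "(\<lambda>n. (c + real n) * (1 + real n) / ((a + real n) * (b + real n))) \<longlonglongrightarrow> 1"
    by real_asymp
  ultimately show "(\<lambda>n. norm (hyp2F1_coeff a b c n) / norm (hyp2F1_coeff a b c (Suc n))) \<longlonglongrightarrow> 1"
    by simp
qed (simp_all add: one_ereal_def)

lemma summable_hyp2F1:
  assumes "0 < a" "0 < b" "0 < c" "\<bar>x\<bar> < 1"
  shows "summable (\<lambda>n. hyp2F1_coeff a b c n * x ^ n)"
  by (rule summable_in_conv_radius) (use assms in \<open>simp add: conv_radius_hyp2F1_coeff\<close>)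

lemma hyp2F1_has_real_derivative:
  assumes "0 < a" "0 < b" "0 < c" "\<bar>x\<bar> < 1"
  shows "(hyp2F1 a b c has_real_derivative a * b / c * hyp2F1 (a + 1) (b + 1) (c + 1) x) (at x)"
proof -
  have "(hyp2F1 a b c has_real_derivative (\<Sum>n. diffs (hyp2F1_coeff a b c) n * x ^ n)) (at x)"
    unfolding hyp2F1_altdef[abs_def]
    by (rule termdiffs_strong'[of 1]) (use assms summable_hyp2F1 in auto)
  also have "(\<Sum>n. diffs (hyp2F1_coeff a b c) n * x ^ n) = a * b / c * hyp2F1 (a + 1) (b + 1) (c + 1) x"
    unfolding diffs_hyp2F1_coeff hyp2F1_altdef mult.assoc
    by (rule suminf_mult) (use assms in \<open>simp add: summable_hyp2F1\<close>)
  finally show ?thesis .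
qed

lemma hyp2F1_at_0 [simp]: "hyp2F1 a b c 0 = 1"
  by (simp add: hyp2F1_altdef)

lemma hyp2F1_ge_1:
  assumes "0 < a" "0 < b" "0 < c" "0 \<le> x" "x < 1"
  shows "1 \<le> hyp2F1 a b c x"
proof -
  have "(\<Sum>n\<in>{0}. hyp2F1_coeff a b c n * x ^ n) \<le> (\<Sum>n. hyp2F1_coeff a b c n * x ^ n)"
    using assms summable_hyp2F1[of a b c x] less_imp_le[OF hyp2F1_coeff_pos[of a b c]]
    by (intro sum_le_suminf) auto
  then show ?thesis by (simp add: hyp2F1_altdef)
qed

lemma one_minus_times_suminf:
  fixes f :: "nat \<Rightarrow> real"
  assumes "summable (\<lambda>n. f n * x ^ n)"
  shows "(1 - x) * (\<Sum>n. f n * x ^ n) = (\<Sum>n. (f n - (if n = 0 then 0 else f (n - 1))) * x ^ n)"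
proof -
  have "(\<lambda>n. (\<lambda>m. (if m = 0 then 0 else f (m - 1)) * x ^ m) (Suc n)) sums ((\<Sum>n. f n * x ^ n) * x)"
    using sums_mult2[OF summable_sums[OF assms], of x] by (simp add: ac_simps)
  then have "(\<lambda>n. (if n = 0 then 0 else f (n - 1)) * x ^ n) sums ((\<Sum>n. f n * x ^ n) * x)"
    by (subst (asm) sums_Suc_iff) simp
  from sums_diff[OF summable_sums[OF assms] this] show ?thesis
    by (simp add: sums_iff algebra_simps)
qed

lemma hyp2F1_coeff_Euler:
  assumes "0 < a" "0 < b"
  shows "hyp2F1_coeff (a + 1) (b + 1) (a + b + 1) n
           - (if n = 0 then 0 else hyp2F1_coeff (a + 1) (b + 1) (a + b + 1) (n - 1))
         = hyp2F1_coeff a b (a + b + 1) n"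
proof (cases n)
  case (Suc m)
  have "hyp2F1_coeff a b (a + b + 1) (Suc m)
          = hyp2F1_coeff (a + 1) (b + 1) (a + b + 1) m * (a * b / ((a + b + 1 + m) * (m + 1)))"
    unfolding hyp2F1_coeff_def pochhammer_rec[of a] pochhammer_rec[of b] pochhammer_Suc[of "a + b + 1"] fact_Suc
    by (simp add: times_divide_times_eq ac_simps)
  also have "a * b / ((a + b + 1 + m) * (m + 1)) = (a + 1 + m) * (b + 1 + m) / ((a + b + 1 + m) * (m + 1)) - 1"
  proof -
    have "(a + 1 + m) * (b + 1 + m) = (a + b + 1 + m) * (m + 1) + a * b"
      by (simp add: algebra_simps)
    then show ?thesis
      using assms by (simp add: add_divide_distrib)
  qed
  finally show ?thesis
    using Suc by (simp add: hyp2F1_coeff_Suc algebra_simps)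
qed simp

lemma hyp2F1_Euler:
  assumes "0 < a" "0 < b" "\<bar>x\<bar> < 1"
  shows "(1 - x) * hyp2F1 (a + 1) (b + 1) (a + b + 1) x = hyp2F1 a b (a + b + 1) x"
  unfolding hyp2F1_altdef
  using assms by (subst one_minus_times_suminf) (simp_all add: summable_hyp2F1 hyp2F1_coeff_Euler)

section \<open>Estimates for the logarithm\<close>

text \<open>The term for n = 0 is x^0 / 0 = 0.\<close>
lemma minus_ln_one_minus_sums:
  fixes x :: real
  assumes "\<bar>x\<bar> < 1"
  shows "(\<lambda>n. x ^ n / real n) sums (- ln (1 - x))"
  using sums_minus[OF ln_series'[of "- x"]] assms by simp

lemma minus_ln_one_minus_le:
  fixes x :: real
  assumes "0 \<le> x" "x < 1"
  shows "- ln (1 - x) \<le> x / (1 - x)"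
proof -
  have "ln (inverse (1 - x)) \<le> inverse (1 - x) - 1"
    using assms by (intro ln_le_minus_one) auto
  moreover have "inverse (1 - x) - 1 = x / (1 - x)"
    using assms by (simp add: field_simps)
  ultimately show ?thesis
    by (simp add: ln_inverse)
qed

lemma one_minus_times_ln_squared_le:
  fixes x :: real
  assumes "0 < x" "x < 1"
  shows "(1 - x) * ln (1 - x) ^ 2 \<le> 8 * x"
proof (cases "x \<le> 1/2")
  case True
  have l: "0 \<le> - ln (1 - x)" "- ln (1 - x) \<le> x / (1 - x)"
    using minus_ln_one_minus_le assms by auto
  have "x / (1 - x) \<le> 1"
    using True by (simp add: divide_le_eq)
  with l(2) have "- ln (1 - x) \<le> 1"
    by linarith
  moreover have "(1 - x) * - ln (1 - x) \<le> x"
    using l(2) assms by (simp add: le_divide_eq mult.commute)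
  ultimately have "((1 - x) * - ln (1 - x)) * - ln (1 - x) \<le> x * 1"
    using l assms by (intro mult_mono) auto
  then show ?thesis
    using assms by (simp add: power2_eq_square mult.assoc)
next
  case False
  have "ln (inverse (sqrt (1 - x))) \<le> inverse (sqrt (1 - x)) - 1"
    using assms by (intro ln_le_minus_one) auto
  moreover have "ln (inverse (sqrt (1 - x))) = - ln (1 - x) / 2"
    using assms by (simp add: ln_inverse ln_sqrt)
  ultimately have "- ln (1 - x) \<le> 2 * inverse (sqrt (1 - x))"
    by linarith
  moreover have "0 \<le> - ln (1 - x)"
    using assms by simp
  ultimately have "ln (1 - x) ^ 2 \<le> (2 * inverse (sqrt (1 - x))) ^ 2"
    by (metis power2_minus power_mono)
  also have "\<dots> = 4 / (1 - x)"
    using assms by (simp add: power_mult_distrib power_inverse divide_inverse)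
  finally have "(1 - x) * ln (1 - x) ^ 2 \<le> 4"
    using assms by (simp add: le_divide_eq mult.commute)
  then show ?thesis
    using False by simp
qed

lemma power_series_le_minus_ln:
  fixes f :: "nat \<Rightarrow> real"
  assumes "0 \<le> x" "x < 1" "\<And>m. 0 \<le> f m" "\<And>m. f m \<le> B / Suc m"
  shows "summable (\<lambda>m. f m * x ^ m)" "x * (\<Sum>m. f m * x ^ m) \<le> B * - ln (1 - x)"
proof -
  have "f m \<le> B" for m
  proof -
    have "0 \<le> B"
      using assms(3)[of 0] assms(4)[of 0] by simp
    then have "B / Suc m \<le> B / 1"
      by (intro divide_left_mono) auto
    then show ?thesis
      using assms(4)[of m] by simp
  qed
  then have "norm (f m * x ^ m) \<le> B * x ^ m" for m
    using assms by (simp add: abs_mult mult_right_mono)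
  moreover have "summable (\<lambda>m. B * x ^ m)"
    using assms by (intro summable_mult summable_geometric) simp
  ultimately show summable: "summable (\<lambda>m. f m * x ^ m)"
    by (blast intro: summable_comparison_test')
  have "(\<lambda>m. x ^ Suc m / real (Suc m)) sums (- ln (1 - x))"
    using minus_ln_one_minus_sums[of x] assms by (subst sums_Suc_iff) simp
  from sums_mult[OF this, of B] have sums_B: "(\<lambda>m. B / Suc m * x ^ Suc m) sums (B * - ln (1 - x))"
    by (simp add: field_simps)
  have sums_f: "(\<lambda>m. f m * x ^ Suc m) sums (x * (\<Sum>m. f m * x ^ m))"
    using sums_mult[OF summable_sums[OF summable], of x] by (simp add: ac_simps)
  have "f m * x ^ Suc m \<le> B / Suc m * x ^ Suc m" for m
    using assms(4)[of m] assms(1) by (intro mult_right_mono) auto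
  then show "x * (\<Sum>m. f m * x ^ m) \<le> B * - ln (1 - x)"
    by (rule sums_le[OF _ sums_f sums_B])
qed

lemma c_minus_ln_pos: "0 \<le> y \<Longrightarrow> y < 1 \<Longrightarrow> 0 < c \<Longrightarrow> 0 < c - ln (1 - y)"
  for c y :: real
  by (smt (verit) ln_le_zero_iff)

lemma has_real_derivative_c_minus_ln:
  fixes c y :: real
  assumes "y < 1"
  shows "((\<lambda>y. c - ln (1 - y)) has_real_derivative 1 / (1 - y)) (at y)"
  using assms by (auto intro!: derivative_eq_intros simp: divide_simps)

lemma has_real_derivative_one_minus_times_c_minus_ln_squared:
  fixes c y :: real
  assumes "y < 1"
  shows "((\<lambda>y. (1 - y) * (c - ln (1 - y))^2) has_real_derivative 2 * (c - ln (1 - y)) - (c - ln (1 - y))^2) (at y)"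
proof -
  have "((\<lambda>y. (1 - y) * (c - ln (1 - y))^2) has_real_derivative
          (- 1) * (c - ln (1 - y))^2 + (1 - y) * (of_nat 2 * (c - ln (1 - y)) ^ (2 - 1) * (1 / (1 - y)))) (at y)"
    by (intro DERIV_mult DERIV_pow has_real_derivative_c_minus_ln assms derivative_eq_intros) (use assms in auto)
  moreover have "(- 1) * (c - ln (1 - y))^2 + (1 - y) * (of_nat 2 * (c - ln (1 - y)) ^ (2 - 1) * (1 / (1 - y)))
      = 2 * (c - ln (1 - y)) - (c - ln (1 - y))^2"
    using assms by simp
  ultimately show ?thesis
    by simp
qed

section \<open>Roots of a real quadratic\<close>

lemma quadratic_le_0_between_roots:
  fixes h P C t :: real
  assumes "0 < h"
    and "(P - sqrt (P^2 - 4 * h * C)) / (2 * h) \<le> t" "t \<le> (P + sqrt (P^2 - 4 * h * C)) / (2 * h)"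
  shows "h * t^2 - P * t + C \<le> 0"
proof -
  define D where "D = P^2 - 4 * h * C"
  have le: "P - sqrt D \<le> 2 * h * t" "2 * h * t \<le> P + sqrt D"
    using assms by (simp_all add: D_def field_simps)
  then have "\<bar>2 * h * t - P\<bar> \<le> sqrt D" "0 \<le> sqrt D"
    unfolding abs_le_iff by linarith+
  then have "\<bar>2 * h * t - P\<bar>^2 \<le> (sqrt D)^2"
    by (intro power_mono) auto
  then have "(2 * h * t - P)^2 \<le> D"
    using \<open>0 \<le> sqrt D\<close> by simp
  moreover have "4 * h * (h * t^2 - P * t + C) = (2 * h * t - P)^2 - D"
    by (simp add: D_def algebra_simps power2_eq_square)
  ultimately have "4 * h * (h * t^2 - P * t + C) \<le> 0"
    by simp
  then show ?thesis
    using assms(1) by (simp add: mult_le_0_iff)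
qed

lemma quadratic_ge_0_above_roots:
  fixes h P C t :: real
  assumes "0 < h" and "(P + sqrt (P^2 - 4 * h * C)) / (2 * h) \<le> t"
  shows "0 \<le> h * t^2 - P * t + C"
proof -
  define D where "D = P^2 - 4 * h * C"
  have "P + sqrt D \<le> 2 * h * t"
    using assms by (simp add: D_def field_simps)
  have "D \<le> (2 * h * t - P)^2"
  proof (cases "0 \<le> D")
    case True
    then have "(sqrt D)^2 \<le> (2 * h * t - P)^2"
      using \<open>P + sqrt D \<le> 2 * h * t\<close> by (intro power_mono) auto
    with True show ?thesis by simp
  qed (use zero_le_power2[of "2 * h * t - P"] in linarith)
  moreover have "4 * h * (h * t^2 - P * t + C) = (2 * h * t - P)^2 - D"
    by (simp add: D_def algebra_simps power2_eq_square)
  ultimately have "0 \<le> 4 * h * (h * t^2 - P * t + C)"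
    by simp
  then show ?thesis
    using assms(1) by (simp add: zero_le_mult_iff)
qed

lemma smaller_root_bounds:
  fixes h P F :: real
  assumes "0 < F" "0 < h" "F \<le> P"
  shows "0 < (P - sqrt (P^2 - 8 * h * F)) / (2 * h)" "(P - sqrt (P^2 - 8 * h * F)) / (2 * h) \<le> 8"
proof -
  define D where "D = P^2 - 8 * h * F"
  have P: "0 < P" using assms by simp
  have "0 < P - sqrt D \<and> P - sqrt D \<le> 16 * h"
  proof (cases "0 \<le> D")
    case True
    have "D < P^2" using assms by (simp add: D_def)
    then have "sqrt D < P"
      using P by (simp add: real_less_lsqrt)
    have "(P - sqrt D) * P \<le> (P - sqrt D) * (P + sqrt D)"
      using True \<open>sqrt D < P\<close> by (intro mult_left_mono) auto
    also have "\<dots> = P^2 - (sqrt D)^2"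
      by (simp add: algebra_simps power2_eq_square)
    also have "\<dots> = 8 * h * F"
      using True by (simp add: D_def)
    also have "\<dots> \<le> 8 * h * P"
      using assms by simp
    finally have "P - sqrt D \<le> 8 * h"
      using P by simp
    with \<open>sqrt D < P\<close> assms show ?thesis by simp
  next
    case False
    have "F * F \<le> P * P" using assms by (intro mult_mono) auto
    also have "\<dots> < 8 * h * F" using False by (simp add: D_def power2_eq_square)
    finally have "F < 8 * h" using assms by simp
    then have "8 * h * F < (8 * h)^2" using assms by (simp add: power2_eq_square)
    moreover have "P^2 < 8 * h * F" and "- D \<le> 8 * h * F"
      using False assms by (simp_all add: D_def)
    ultimately have "P^2 < (8 * h)^2" "- D < (8 * h)^2"
      by linarith+
    then have "P < 8 * h" "sqrt (- D) < 8 * h"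
      using assms by (auto intro: power_less_imp_less_base[of _ 2] real_less_lsqrt)
    moreover have "sqrt D = - sqrt (- D)" "0 \<le> sqrt (- D)"
      using False by (simp_all add: real_sqrt_minus)
    ultimately show ?thesis
      using P by linarith
  qed
  then show "0 < (P - sqrt (P^2 - 8 * h * F)) / (2 * h)" "(P - sqrt (P^2 - 8 * h * F)) / (2 * h) \<le> 8"
    using assms by (simp_all add: D_def divide_le_eq)
qed

section \<open>The zero-balanced function F(a, b; a + b; x)\<close>

locale zero_balanced =
  fixes a b :: real
  assumes a_pos: "0 < a" and b_pos: "0 < b" and sum_le_1: "a + b \<le> 1"
begin

abbreviation F where "F \<equiv> hyp2F1 a b (a + b)"
abbreviation G where "G \<equiv> hyp2F1 a b (a + b + 1)"
abbreviation H where "H \<equiv> hyp2F1 (a + 1) (b + 1) (a + b + 2)"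

definition k :: real where "k = a * b / (a + b)"

definition F' :: "real \<Rightarrow> real" where
  "F' x = k * hyp2F1 (a + 1) (b + 1) (a + b + 1) x"

definition F'' :: "real \<Rightarrow> real" where
  "F'' x = k * ((a + 1) * (b + 1) / (a + b + 1)) * hyp2F1 (a + 2) (b + 2) (a + b + 2) x"

lemma k_pos: "0 < k"
  using a_pos b_pos by (simp add: k_def)

lemma has_real_derivative_F: "\<bar>x\<bar> < 1 \<Longrightarrow> (F has_real_derivative F' x) (at x)"
  using hyp2F1_has_real_derivative[of a b "a + b" x] a_pos b_pos by (simp add: F'_def k_def)

lemma has_real_derivative_F': "\<bar>x\<bar> < 1 \<Longrightarrow> (F' has_real_derivative F'' x) (at x)"
  unfolding F'_def[abs_def] F''_def
  using hyp2F1_has_real_derivative[of "a + 1" "b + 1" "a + b + 1" x] a_pos b_pos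
  by (auto intro!: derivative_eq_intros simp: add_ac)

lemma one_minus_times_F': "\<bar>x\<bar> < 1 \<Longrightarrow> (1 - x) * F' x = k * G x"
  using hyp2F1_Euler[OF a_pos b_pos] by (simp add: F'_def)

lemma gfun_eq:
  assumes "\<bar>x\<bar> < 1"
  shows "gfun a b x = - (2 * (1 - x) * F' x + F x)"
proof -
  have "2 * (1 - x) * F' x = 2 * (k * G x)"
    using one_minus_times_F'[OF assms] by (simp only: mult.assoc)
  then show ?thesis
    unfolding gfun_def k_def by simp
qed

text \<open>Differentiating (1 - x) F'(x) = k G(x) identifies the second derivative.\<close>
lemma hfun_eq:
  assumes "\<bar>x\<bar> < 1"
  shows "hfun a b x = (1 - x)^2 * F'' x"
proof -
  have "((\<lambda>y. (1 - y) * F' y) has_real_derivative (- F' x + (1 - x) * F'' x)) (at x)"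
    using has_real_derivative_F'[OF assms] by (auto intro!: derivative_eq_intros)
  moreover have "((\<lambda>y. (1 - y) * F' y) has_real_derivative k * (a * b / (a + b + 1) * H x)) (at x)"
  proof (rule has_field_derivative_transform_within_open[where S = "{-1<..<1}"])
    show "((\<lambda>y. k * G y) has_real_derivative k * (a * b / (a + b + 1) * H x)) (at x)"
      using hyp2F1_has_real_derivative[of a b "a + b + 1" x] assms a_pos b_pos
      by (auto intro!: derivative_eq_intros simp: add_ac)
  qed (use assms one_minus_times_F' in \<open>auto simp: abs_less_iff\<close>)
  ultimately have "- F' x + (1 - x) * F'' x = k * (a * b / (a + b + 1) * H x)"
    by (rule DERIV_unique)
  then have "(1 - x) * F'' x = F' x + k * (a * b / (a + b + 1) * H x)"
    by linarith
  then have "(1 - x)^2 * F'' x = (1 - x) * (F' x + k * (a * b / (a + b + 1) * H x))"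
    by (metis mult.assoc power2_eq_square)
  also have "\<dots> = k * G x + (1 - x) * (k * (a * b / (a + b + 1) * H x))"
    using one_minus_times_F'[OF assms] by (simp add: distrib_left)
  also have "\<dots> = hfun a b x"
  proof -
    have "hfun a b x = k * (a * b / (a + b + 1)) * (1 - x) * H x + k * G x"
      unfolding hfun_def k_def by (simp add: power2_eq_square times_divide_times_eq)
    then show ?thesis
      by (simp add: algebra_simps)
  qed
  finally show ?thesis ..
qed

lemma k_le_k_G: "0 \<le> x \<Longrightarrow> x < 1 \<Longrightarrow> k \<le> k * G x"
  using hyp2F1_ge_1[of a b "a + b + 1" x] a_pos b_pos k_pos by simp

lemma k_G_le_hfun: "0 \<le> x \<Longrightarrow> x < 1 \<Longrightarrow> k * G x \<le> hfun a b x"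
  using hyp2F1_ge_1[of "a + 1" "b + 1" "a + b + 2" x] a_pos b_pos
  unfolding hfun_def k_def by (simp add: mult.assoc)

lemma F_ge_1: "0 \<le> x \<Longrightarrow> x < 1 \<Longrightarrow> 1 \<le> F x"
  using hyp2F1_ge_1[of a b "a + b" x] a_pos b_pos by simp

lemma F_le_minus_gfun: "0 \<le> x \<Longrightarrow> x < 1 \<Longrightarrow> F x \<le> - gfun a b x"
  using k_le_k_G k_pos unfolding gfun_def k_def by fastforce

subsection \<open>Behaviour as x tends to 1\<close>

abbreviation A where "A \<equiv> hyp2F1_coeff a b (a + b)"
abbreviation C where "C \<equiv> hyp2F1_coeff a b (a + b + 1)"

definition L :: real where "L = 1 / Beta a b"

definition q :: "nat \<Rightarrow> real" where "q n = n * A n"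

lemma q_Suc: "q (Suc n) = k * hyp2F1_coeff (a + 1) (b + 1) (a + b + 1) n"
  using diffs_hyp2F1_coeff[of a b "a + b" n] by (simp add: q_def diffs_def k_def)

lemma q_Suc_minus_q: "q (Suc n) - q n = k * C n"
proof (cases n)
  case 0
  then show ?thesis
    using q_Suc[of 0] by (simp add: q_def)
next
  case (Suc m)
  then show ?thesis
    using hyp2F1_coeff_Euler[OF a_pos b_pos, of n] by (simp add: q_Suc flip: right_diff_distrib)
qed

lemma k_C_eq: "k * C n = a * b * A n / (a + b + n)"
  using hyp2F1_coeff_shift_c[of "a + b" a b n] a_pos b_pos by (simp add: k_def)

lemma q_Suc_eq_Gamma_series: "q (Suc n) = Gamma_series (a + b) n / (Gamma_series a n * Gamma_series b n)"
proof -
  have "0 < pochhammer a (Suc n)" "0 < pochhammer b (Suc n)" "0 < pochhammer (a + b) (Suc n)"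
    using a_pos b_pos by (simp_all add: pochhammer_pos)
  moreover have "exp ((a + b) * ln n) = exp (a * ln n) * exp (b * ln n)"
    by (simp add: distrib_right exp_add)
  ultimately show ?thesis
    unfolding q_def hyp2F1_coeff_def Gamma_series_def fact_Suc by (simp add: divide_simps)
qed

lemma q_tendsto_L: "q \<longlonglongrightarrow> L"
proof -
  have "(\<lambda>n. Gamma_series (a + b) n / (Gamma_series a n * Gamma_series b n))
          \<longlonglongrightarrow> Gamma (a + b) / (Gamma a * Gamma b)"
    using a_pos b_pos
    by (intro tendsto_intros) (auto simp: Gamma_eq_zero_iff elim!: nonpos_Ints_cases')
  then have "(\<lambda>n. q (Suc n)) \<longlonglongrightarrow> L"
    unfolding q_Suc_eq_Gamma_series L_def Beta_def by simp
  then show ?thesis by (rule LIMSEQ_imp_Suc)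
qed

lemma incseq_q: "incseq q"
  using q_Suc_minus_q k_pos hyp2F1_coeff_pos a_pos b_pos
  by (intro incseq_SucI) (smt (verit) add_pos_pos mult_pos_pos)

lemma q_le_L: "q n \<le> L"
  using incseq_le[OF incseq_q q_tendsto_L] .

lemma L_pos: "0 < L"
  using q_le_L[of 1] hyp2F1_coeff_pos[of a b "a + b" 1] a_pos b_pos by (simp add: q_def)

lemma A_le: "1 \<le> n \<Longrightarrow> A n \<le> L / n"
  using q_le_L[of n] by (simp add: q_def field_simps)

lemma k_C_le:
  assumes "1 \<le> n"
  shows "k * C n \<le> a * b * L / real n ^ 2"
proof -
  have "k * C n \<le> a * b * A n / n"
    unfolding k_C_eq using a_pos b_pos hyp2F1_coeff_pos[of a b "a + b" n] assms
    by (intro divide_left_mono) auto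
  also have "\<dots> \<le> a * b * (L / n) / n"
    using A_le[OF assms] a_pos b_pos by (intro divide_right_mono mult_left_mono) auto
  finally show ?thesis
    by (simp add: power2_eq_square)
qed

text \<open>The sequence q (n + 1) + 2abL/(n + 1) decreases to L.\<close>
lemma L_minus_q_le:
  assumes "1 \<le> n"
  shows "L - q n \<le> 2 * a * b * L / n"
proof -
  define r where "r m = q (Suc m) + 2 * a * b * L / Suc m" for m
  have "r (Suc m) \<le> r m" for m
  proof -
    have "k * C (Suc m) \<le> a * b * L / real (Suc m) ^ 2"
      by (rule k_C_le) simp
    also have "\<dots> = 2 * (a * b * L) / (2 * real (Suc m) ^ 2)"
      by simp
    also have "\<dots> \<le> 2 * (a * b * L) / (real (Suc m) * Suc (Suc m))"
      using a_pos b_pos L_pos by (intro frac_le) (auto simp: power2_eq_square)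
    also have "\<dots> = 2 * a * b * L / Suc m - 2 * a * b * L / Suc (Suc m)"
      by (simp add: divide_simps algebra_simps)
    finally show ?thesis
      unfolding r_def using q_Suc_minus_q[of "Suc m"] by linarith
  qed
  then have "decseq r"
    by (rule decseq_SucI)
  moreover have "r \<longlonglongrightarrow> L + 0"
    unfolding r_def
    by (intro tendsto_add LIMSEQ_Suc[OF q_tendsto_L] tendsto_divide_0[OF tendsto_const]
        filterlim_at_top_imp_at_infinity filterlim_compose[OF filterlim_real_sequentially filterlim_Suc])
  ultimately have "L \<le> r (n - 1)"
    using decseq_ge by force
  then show ?thesis
    unfolding r_def using assms by simp
qed

text \<open>The coefficients L/n of -L ln(1 - x) match those of F up to O(1/n^2), by the rate of q n \<longrightarrow> L.\<close>
lemma F_plus_L_ln_bounded: "\<exists>K. \<forall>x. 0 \<le> x \<longrightarrow> x < 1 \<longrightarrow> \<bar>F x + L * ln (1 - x)\<bar> \<le> K"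
proof -
  define B where "B n = (if n = 0 then 1 else 2 * a * b * L * inverse (real n ^ 2))" for n
  have "summable (\<lambda>n. 2 * a * b * L * inverse (real n ^ 2))"
    by (intro summable_mult inverse_power_summable) simp
  moreover have "eventually (\<lambda>n. B n = 2 * a * b * L * inverse (real n ^ 2)) sequentially"
    unfolding B_def eventually_sequentially by (intro exI[of _ 1]) simp
  ultimately have "summable B"
    by (simp add: summable_cong)
  have "\<bar>F x + L * ln (1 - x)\<bar> \<le> suminf B" if x: "0 \<le> x" "x < 1" for x
  proof -
    have "(\<lambda>n. A n * x ^ n - L * (x ^ n / n)) sums (F x - L * - ln (1 - x))"
      using x a_pos b_pos
      by (intro sums_diff sums_mult minus_ln_one_minus_sums)
         (auto simp: hyp2F1_altdef intro!: summable_sums summable_hyp2F1)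
    then have sums: "(\<lambda>n. (A n - L / n) * x ^ n) sums (F x + L * ln (1 - x))"
      by (simp add: algebra_simps)
    have "\<bar>(A n - L / n) * x ^ n\<bar> \<le> B n" for n
    proof (cases "n = 0")
      case False
      have "\<bar>A n - L / n\<bar> = (L - q n) / n"
        using A_le[of n] False by (simp add: q_def field_simps)
      also have "\<dots> \<le> 2 * a * b * L / n / n"
        using L_minus_q_le[of n] False by (intro divide_right_mono) auto
      finally have "\<bar>A n - L / n\<bar> \<le> B n"
        using False by (simp add: B_def power2_eq_square divide_inverse)
      moreover have "\<bar>A n - L / n\<bar> * \<bar>x ^ n\<bar> \<le> \<bar>A n - L / n\<bar>"
        using x by (intro mult_left_le) (auto simp: power_le_one)
      ultimately show ?thesis
        by (simp add: abs_mult)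
    qed (simp add: B_def)
    then have "norm (\<Sum>n. (A n - L / n) * x ^ n) \<le> suminf B"
      by (intro norm_suminf_le \<open>summable B\<close>) simp
    then show ?thesis
      using sums_unique[OF sums] by simp
  qed
  then show ?thesis by blast
qed

lemma L_minus_q_Suc_bounds: "0 \<le> L - q (Suc m)" "L - q (Suc m) \<le> 2 * a * b * L / Suc m"
  using q_le_L L_minus_q_le[of "Suc m"] by auto

lemma L_minus_k_G_bounds:
  assumes "0 \<le> x" "x < 1"
  shows "0 \<le> L - k * G x" "x * (L - k * G x) \<le> 2 * a * b * L * (1 - x) * - ln (1 - x)"
proof -
  define e where "e m = L - q (Suc m)" for m
  have summable: "summable (\<lambda>m. e m * x ^ m)"
    and bound: "x * (\<Sum>m. e m * x ^ m) \<le> 2 * a * b * L * - ln (1 - x)"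
    using power_series_le_minus_ln[OF assms, of e] L_minus_q_Suc_bounds unfolding e_def by auto
  have "(\<lambda>m. ((if m = 0 then L else 0) - k * C m) * x ^ m) sums (L - k * G x)"
  proof -
    have "(\<lambda>m. (if m = 0 then L else 0) * x ^ m) = (\<lambda>m. if m = 0 then L else 0)"
      by auto
    then have "(\<lambda>m. (if m = 0 then L else 0) * x ^ m) sums L"
      using sums_single[of 0 "\<lambda>_. L"] by simp
    moreover have "(\<lambda>m. k * (C m * x ^ m)) sums (k * G x)"
      using assms a_pos b_pos by (intro sums_mult) (simp add: hyp2F1_altdef summable_sums summable_hyp2F1)
    ultimately show ?thesis
      using sums_diff by (fastforce simp: algebra_simps)
  qed
  moreover have "e m - (if m = 0 then 0 else e (m - 1)) = (if m = 0 then L else 0) - k * C m" for m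
    using q_Suc_minus_q[of m] by (cases m) (simp_all add: e_def q_def)
  ultimately have eq: "L - k * G x = (1 - x) * (\<Sum>m. e m * x ^ m)"
    using one_minus_times_suminf[OF summable] sums_unique by simp
  have "0 \<le> (\<Sum>m. e m * x ^ m)"
    using summable assms L_minus_q_Suc_bounds by (intro suminf_nonneg) (simp_all add: e_def)
  then show "0 \<le> L - k * G x"
    unfolding eq using assms by simp
  have "x * (L - k * G x) = (1 - x) * (x * (\<Sum>m. e m * x ^ m))"
    unfolding eq by (simp add: ac_simps)
  also have "\<dots> \<le> (1 - x) * (2 * a * b * L * - ln (1 - x))"
    using bound assms by (intro mult_left_mono) auto
  finally show "x * (L - k * G x) \<le> 2 * a * b * L * (1 - x) * - ln (1 - x)"
    by (simp add: ac_simps)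
qed

lemma H_coeff_le: "hyp2F1_coeff (a + 1) (b + 1) (a + b + 2) n \<le> (a + b + 1) * L / k / Suc n"
proof -
  have "Suc n * C (Suc n) = a * b / (a + b + 1) * hyp2F1_coeff (a + 1) (b + 1) (a + b + 2) n"
    using diffs_hyp2F1_coeff[of a b "a + b + 1" n] by (simp add: diffs_def add_ac)
  then have "hyp2F1_coeff (a + 1) (b + 1) (a + b + 2) n = (a + b + 1) / (a * b * k) * Suc n * (k * C (Suc n))"
    using a_pos b_pos k_pos by (simp add: field_simps)
  also have "\<dots> \<le> (a + b + 1) / (a * b * k) * Suc n * (a * b * L / real (Suc n) ^ 2)"
    using k_C_le[of "Suc n"] a_pos b_pos k_pos by (intro mult_left_mono) auto
  also have "\<dots> = (a + b + 1) * L / k / Suc n"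
  proof -
    have "(a + b + 1) / (a * b * k) * N * (a * b * L / N ^ 2) = (a + b + 1) * L / k / N" if "0 < N" for N :: real
      using that a_pos b_pos k_pos by (simp add: field_simps power2_eq_square)
    then show ?thesis by simp
  qed
  finally show ?thesis .
qed

lemma hfun_minus_k_G_bound:
  assumes "0 \<le> x" "x < 1"
  shows "x * (hfun a b x - k * G x) \<le> a * b * L * (1 - x) * - ln (1 - x)"
proof -
  have "x * (\<Sum>m. hyp2F1_coeff (a + 1) (b + 1) (a + b + 2) m * x ^ m) \<le> (a + b + 1) * L / k * - ln (1 - x)"
    by (rule power_series_le_minus_ln(2)[OF assms])
       (use H_coeff_le hyp2F1_coeff_pos a_pos b_pos in \<open>auto intro: less_imp_le\<close>)
  then have "x * H x \<le> (a + b + 1) * L / k * - ln (1 - x)"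
    by (simp add: hyp2F1_altdef)
  then have "(a * b)^2 / ((a + b) * (a + b + 1)) * (1 - x) * (x * H x)
      \<le> (a * b)^2 / ((a + b) * (a + b + 1)) * (1 - x) * ((a + b + 1) * L / k * - ln (1 - x))"
    using assms a_pos b_pos by (intro mult_left_mono) auto
  also have "\<dots> = ((a * b)^2 / ((a + b) * (a + b + 1)) * ((a + b + 1) * L / k)) * (1 - x) * - ln (1 - x)"
    by (simp only: mult.assoc mult.commute mult.left_commute)
  also have "(a * b)^2 / ((a + b) * (a + b + 1)) * ((a + b + 1) * L / k) = a * b * L"
  proof -
    have "X^2 / (S * (S + 1)) * ((S + 1) * L / (X / S)) = X * L" if "0 < X" "0 < S" for X S :: real
      using that by (simp add: power2_eq_square divide_simps)
    then show ?thesis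
      using a_pos b_pos by (simp add: k_def)
  qed
  finally show ?thesis
    unfolding hfun_def k_def by (simp add: algebra_simps)
qed

lemma hfun_pos: "0 \<le> x \<Longrightarrow> x < 1 \<Longrightarrow> 0 < hfun a b x"
  using k_pos k_le_k_G k_G_le_hfun by (meson less_le_trans order_trans)

lemma ln_times_L_minus_hfun_bound:
  assumes "0 \<le> x" "x < 1"
  shows "\<bar>ln (1 - x) * (L - hfun a b x)\<bar> \<le> 24 * a * b * L"
proof (cases "x = 0")
  case False
  then have x: "0 < x" using assms by simp
  have "x * \<bar>L - hfun a b x\<bar> \<le> x * (L - k * G x) + x * (hfun a b x - k * G x)"
    using L_minus_k_G_bounds(1)[OF assms] k_G_le_hfun[OF assms] x
    by (simp add: abs_le_iff flip: distrib_left)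
  also have "\<dots> \<le> 3 * a * b * L * (1 - x) * - ln (1 - x)"
    using L_minus_k_G_bounds(2)[OF assms] hfun_minus_k_G_bound[OF assms] by simp
  finally have "- ln (1 - x) * (x * \<bar>L - hfun a b x\<bar>) \<le> - ln (1 - x) * (3 * a * b * L * (1 - x) * - ln (1 - x))"
    using assms by (intro mult_left_mono) auto
  also have "\<dots> = 3 * a * b * L * ((1 - x) * ln (1 - x) ^ 2)"
    by (simp add: power2_eq_square)
  also have "\<dots> \<le> 3 * a * b * L * (8 * x)"
    using one_minus_times_ln_squared_le[OF x assms(2)] a_pos b_pos L_pos by (intro mult_left_mono) auto
  finally have bound: "- ln (1 - x) * (x * \<bar>L - hfun a b x\<bar>) \<le> x * (24 * a * b * L)"
    by (simp add: ac_simps)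
  have "x * \<bar>ln (1 - x) * (L - hfun a b x)\<bar> = - ln (1 - x) * (x * \<bar>L - hfun a b x\<bar>)"
    using assms by (simp add: abs_mult abs_of_nonpos)
  with bound have "x * \<bar>ln (1 - x) * (L - hfun a b x)\<bar> \<le> x * (24 * a * b * L)"
    by simp
  then show ?thesis
    using x by simp
qed (use a_pos b_pos L_pos in simp)

lemma F_div_hfun_plus_ln_bounded: "\<exists>K. \<forall>x. 0 \<le> x \<longrightarrow> x < 1 \<longrightarrow> \<bar>F x / hfun a b x + ln (1 - x)\<bar> \<le> K"
proof -
  obtain K where K: "\<And>x. 0 \<le> x \<Longrightarrow> x < 1 \<Longrightarrow> \<bar>F x + L * ln (1 - x)\<bar> \<le> K"
    using F_plus_L_ln_bounded by blast
  have "\<bar>F x / hfun a b x + ln (1 - x)\<bar> \<le> (K + 24 * a * b * L) / k" if x: "0 \<le> x" "x < 1" for x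
  proof -
    have h: "k \<le> hfun a b x" "0 < hfun a b x"
      using k_le_k_G[OF x] k_G_le_hfun[OF x] hfun_pos[OF x] by auto
    have "F x / hfun a b x + ln (1 - x) = ((F x + L * ln (1 - x)) - ln (1 - x) * (L - hfun a b x)) / hfun a b x"
      using h by (simp add: field_simps)
    moreover have "\<bar>(F x + L * ln (1 - x)) - ln (1 - x) * (L - hfun a b x)\<bar> \<le> K + 24 * a * b * L"
      using K[OF x] ln_times_L_minus_hfun_bound[OF x] by linarith
    ultimately have "\<bar>F x / hfun a b x + ln (1 - x)\<bar> \<le> (K + 24 * a * b * L) / hfun a b x"
      using h by (simp add: abs_div divide_right_mono)
    also have "\<dots> \<le> (K + 24 * a * b * L) / k"
    proof (rule divide_left_mono)
      show "0 \<le> K + 24 * a * b * L"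
        using K[OF x] a_pos b_pos L_pos abs_ge_zero[of "F x + L * ln (1 - x)"] by simp
    qed (use h k_pos in auto)
    finally show ?thesis .
  qed
  then show ?thesis by blast
qed

lemma Deltafun_eq: "Deltafun a b x = (- gfun a b x)^2 - 8 * hfun a b x * F x"
  by (simp add: Deltafun_def)

lemma Deltafun_smaller_root_bounds:
  assumes "0 \<le> x" "x < 1"
  shows "0 < (- gfun a b x - sqrt (Deltafun a b x)) / (2 * hfun a b x)"
    "(- gfun a b x - sqrt (Deltafun a b x)) / (2 * hfun a b x) \<le> 8"
  unfolding Deltafun_eq
  using smaller_root_bounds[of "F x" "hfun a b x" "- gfun a b x"] F_ge_1[OF assms] hfun_pos[OF assms]
    F_le_minus_gfun[OF assms] by auto

lemma bdd_above_phi_minus: "bdd_above (phi_minus a b ` {0..<1})"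
proof (rule bdd_aboveI2)
  fix x :: real
  assume "x \<in> {0..<1}"
  then have "ln (1 - x) \<le> 0" "(- gfun a b x - sqrt (Deltafun a b x)) / (2 * hfun a b x) \<le> 8"
    using Deltafun_smaller_root_bounds(2)[of x] by auto
  then show "phi_minus a b x \<le> 8"
    unfolding phi_minus_def by linarith
qed

lemma phi_plus_bounded: "\<exists>K. \<forall>x\<in>{0..<1}. \<bar>phi_plus a b x\<bar> \<le> K"
proof -
  obtain K where K: "\<And>x. 0 \<le> x \<Longrightarrow> x < 1 \<Longrightarrow> \<bar>F x / hfun a b x + ln (1 - x)\<bar> \<le> K"
    using F_div_hfun_plus_ln_bounded by blast
  have "\<bar>phi_plus a b x\<bar> \<le> K + 10" if x: "0 \<le> x" "x < 1" for x
  proof -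
    define r where "r = (- gfun a b x - sqrt (Deltafun a b x)) / (2 * hfun a b x)"
    have h: "0 < hfun a b x" using hfun_pos[OF x] .
    have g: "gfun a b x = - (2 * (k * G x) + F x)"
      by (simp add: gfun_def k_def)
    have "phi_plus a b x = (F x / hfun a b x + ln (1 - x)) + 2 * (k * G x / hfun a b x) - r"
      unfolding phi_plus_def r_def g using h by (simp add: field_simps)
    moreover have "0 \<le> k * G x / hfun a b x" "k * G x / hfun a b x \<le> 1"
      using k_pos k_le_k_G[OF x] k_G_le_hfun[OF x] h by auto
    moreover have "0 < r" "r \<le> 8"
      using Deltafun_smaller_root_bounds[OF x] by (simp_all add: r_def)
    ultimately show ?thesis
      using K[OF x] by linarith
  qed
  then show ?thesis
    by (intro exI[of _ "K + 10"]) auto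
qed

lemma bdd_phi_plus: "bdd_above (phi_plus a b ` {0..<1})" "bdd_below (phi_plus a b ` {0..<1})"
proof -
  obtain K where "\<And>x. x \<in> {0..<1} \<Longrightarrow> \<bar>phi_plus a b x\<bar> \<le> K"
    using phi_plus_bounded by blast
  then show "bdd_above (phi_plus a b ` {0..<1})" "bdd_below (phi_plus a b ` {0..<1})"
    by (intro bdd_aboveI2[of _ _ K] bdd_belowI2[of _ "- K"]; force simp: abs_le_iff)+
qed

lemma phi_minus_le_delta_minus: "x \<in> {0..<1} \<Longrightarrow> phi_minus a b x \<le> delta_minus a b"
  unfolding delta_minus_def by (rule cSUP_upper[OF _ bdd_above_phi_minus])

lemma delta_plus_le_phi_plus: "x \<in> {0..<1} \<Longrightarrow> delta_plus a b \<le> phi_plus a b x"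
  unfolding delta_plus_def by (rule cINF_lower[OF bdd_phi_plus(2)])

lemma phi_plus_le_alpha0: "x \<in> {0..<1} \<Longrightarrow> phi_plus a b x \<le> alpha0 a b"
  unfolding alpha0_def by (rule cSUP_upper[OF _ bdd_phi_plus(1)])

lemma phi_minus_0_pos: "0 < phi_minus a b 0"
  using Deltafun_smaller_root_bounds(1)[of 0] by (simp add: phi_minus_def)

lemma Deltafun_0_nonneg: "0 \<le> Deltafun a b 0"
proof -
  have "4 * (a * b) \<le> (a + b)^2"
    using zero_le_power2[of "a - b"] by (simp add: power2_eq_square algebra_simps)
  then have "4 * k \<le> a + b"
    using a_pos b_pos by (simp add: k_def divide_simps power2_eq_square)
  then have k: "4 * k \<le> 1"
    using sum_le_1 by simp
  define c0 where "c0 = (a * b)^2 / ((a + b) * (a + b + 1))"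
  have "c0 = k^2 * ((a + b) / (a + b + 1))"
    using a_pos b_pos by (simp add: c0_def k_def power2_eq_square divide_simps)
  also have "\<dots> \<le> k^2 * (1 / 2)"
    using a_pos b_pos sum_le_1 by (intro mult_left_mono) (simp_all add: divide_le_eq)
  finally have "c0 \<le> k^2 / 2"
    by simp
  moreover have "Deltafun a b 0 = (2 * k + 1)^2 - 8 * (c0 + k)"
    by (simp add: Deltafun_def hfun_def gfun_def k_def c0_def power2_eq_square algebra_simps)
  ultimately have "1 - 4 * k \<le> Deltafun a b 0"
    by (simp add: power2_eq_square algebra_simps)
  with k show ?thesis
    by simp
qed

lemma phi_plus_0_pos: "0 < phi_plus a b 0"
proof -
  have "0 < - gfun a b 0" "0 < hfun a b 0"
    using F_le_minus_gfun[of 0] hfun_pos[of 0] by auto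
  moreover have "0 \<le> sqrt (Deltafun a b 0)"
    using Deltafun_0_nonneg by simp
  ultimately have "0 < (- gfun a b 0 + sqrt (Deltafun a b 0)) / (2 * hfun a b 0)"
    by (intro divide_pos_pos; linarith)
  then show ?thesis
    by (simp add: phi_plus_def)
qed

subsection \<open>Concavity of F(x) / (c - log (1 - x))\<close>

definition u :: "real \<Rightarrow> real \<Rightarrow> real" where
  "u c y = F y / (c - ln (1 - y))"

definition u' :: "real \<Rightarrow> real \<Rightarrow> real" where
  "u' c y = F' y / (c - ln (1 - y)) - F y / ((1 - y) * (c - ln (1 - y))^2)"

definition Q :: "real \<Rightarrow> real \<Rightarrow> real" where
  "Q c y = hfun a b y * (c - ln (1 - y))^2 + gfun a b y * (c - ln (1 - y)) + 2 * F y"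

lemma has_real_derivative_u:
  assumes "0 \<le> y" "y < 1" "0 < c"
  shows "(u c has_real_derivative u' c y) (at y)"
proof -
  let ?T = "c - ln (1 - y)"
  have T: "0 < ?T" using c_minus_ln_pos[OF assms] .
  have "(u c has_real_derivative (F' y * ?T - F y * (1 / (1 - y))) / (?T * ?T)) (at y)"
    unfolding u_def[abs_def]
    by (rule DERIV_divide[OF has_real_derivative_F has_real_derivative_c_minus_ln]) (use assms T in auto)
  moreover have "(F1 * T - F0 * (1 / (1 - y))) / (T * T) = F1 / T - F0 / ((1 - y) * T^2)"
    if "T \<noteq> 0" for F0 F1 T :: real
    using that assms by (simp add: field_simps power2_eq_square)
  ultimately show ?thesis
    using T unfolding u'_def by simp
qed

lemma has_real_derivative_u':
  assumes "0 \<le> y" "y < 1" "0 < c"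
  shows "(u' c has_real_derivative Q c y / ((1 - y)^2 * (c - ln (1 - y))^3)) (at y)"
proof -
  let ?T = "c - ln (1 - y)" and ?W = "(1 - y) * (c - ln (1 - y))^2"
  have T: "0 < ?T" using c_minus_ln_pos[OF assms] .
  have "(u' c has_real_derivative
      (F'' y * ?T - F' y * (1 / (1 - y))) / (?T * ?T)
      - (F' y * ?W - F y * (2 * ?T - ?T^2)) / (?W * ?W)) (at y)"
    (is "(_ has_real_derivative ?D) _")
    unfolding u'_def[abs_def] using assms T
    by (intro DERIV_diff DERIV_divide has_real_derivative_F' has_real_derivative_F
        has_real_derivative_c_minus_ln has_real_derivative_one_minus_times_c_minus_ln_squared) auto
  moreover have "?D = ((1 - y)^2 * F'' y * ?T^2 - (2 * (1 - y) * F' y + F y) * ?T + 2 * F y) / ((1 - y)^2 * ?T^3)"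
  proof -
    have alg: "(F2 * T - F1 * (1 / Y)) / (T * T) - (F1 * (Y * T^2) - F0 * (2 * T - T^2)) / ((Y * T^2) * (Y * T^2))
        = (Y^2 * F2 * T^2 - (2 * Y * F1 + F0) * T + 2 * F0) / (Y^2 * T^3)"
      if "Y \<noteq> 0" "T \<noteq> 0" for F0 F1 F2 Y T :: real
      using that by (simp add: field_simps power2_eq_square power3_eq_cube)
    show ?thesis
      by (rule alg) (use assms T in auto)
  qed
  moreover have "(1 - y)^2 * F'' y * ?T^2 - (2 * (1 - y) * F' y + F y) * ?T + 2 * F y = Q c y"
    using assms unfolding Q_def by (simp add: hfun_eq gfun_eq algebra_simps)
  ultimately show ?thesis
    by simp
qed

lemma Deltafun_eq_discriminant: "Deltafun a b y = (- gfun a b y)^2 - 4 * hfun a b y * (2 * F y)"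
  by (simp add: Deltafun_def)

lemma Q_nonpos:
  assumes "0 \<le> y" "y < 1" "phi_minus a b y \<le> c" "c \<le> phi_plus a b y"
  shows "Q c y \<le> 0"
proof -
  have "(- gfun a b y - sqrt (Deltafun a b y)) / (2 * hfun a b y) \<le> c - ln (1 - y)"
    "c - ln (1 - y) \<le> (- gfun a b y + sqrt (Deltafun a b y)) / (2 * hfun a b y)"
    using assms(3,4) unfolding phi_minus_def phi_plus_def by linarith+
  from quadratic_le_0_between_roots[OF hfun_pos[OF assms(1,2)] this[unfolded Deltafun_eq_discriminant]]
  show ?thesis
    unfolding Q_def by simp
qed

lemma Q_nonneg:
  assumes "0 \<le> y" "y < 1" "phi_plus a b y \<le> c"
  shows "0 \<le> Q c y"
proof -
  have "(- gfun a b y + sqrt (Deltafun a b y)) / (2 * hfun a b y) \<le> c - ln (1 - y)"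
    using assms(3) unfolding phi_plus_def by linarith
  from quadratic_ge_0_above_roots[OF hfun_pos[OF assms(1,2)] this[unfolded Deltafun_eq_discriminant]]
  show ?thesis
    unfolding Q_def by simp
qed

lemma u'_antimono:
  assumes "0 < c" "\<And>y. 0 < y \<Longrightarrow> y < 1 \<Longrightarrow> Q c y \<le> 0" "0 < y1" "y1 \<le> y2" "y2 < 1"
  shows "u' c y2 \<le> u' c y1"
proof (rule DERIV_nonpos_imp_nonincreasing[OF assms(4)])
  fix y assume "y1 \<le> y" "y \<le> y2"
  then have y: "0 < y" "y < 1" using assms by auto
  have "0 < (1 - y)^2 * (c - ln (1 - y))^3"
    using c_minus_ln_pos[of y c] y assms(1) by simp
  then have "Q c y / ((1 - y)^2 * (c - ln (1 - y))^3) \<le> 0"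
    using assms(2)[OF y] by (simp add: divide_nonpos_pos)
  then show "\<exists>D. (u' c has_real_derivative D) (at y) \<and> D \<le> 0"
    using has_real_derivative_u'[of y c] y assms(1) by auto
qed

lemma u'_mono:
  assumes "0 < c" "\<And>y. 0 < y \<Longrightarrow> y < 1 \<Longrightarrow> 0 \<le> Q c y" "0 < y1" "y1 \<le> y2" "y2 < 1"
  shows "u' c y1 \<le> u' c y2"
proof (rule DERIV_nonneg_imp_nondecreasing[OF assms(4)])
  fix y assume "y1 \<le> y" "y \<le> y2"
  then have y: "0 < y" "y < 1" using assms by auto
  have "0 < (1 - y)^2 * (c - ln (1 - y))^3"
    using c_minus_ln_pos[of y c] y assms(1) by simp
  then have "0 \<le> Q c y / ((1 - y)^2 * (c - ln (1 - y))^3)"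
    using assms(2)[OF y] by simp
  then show "\<exists>D. (u' c has_real_derivative D) (at y) \<and> 0 \<le> D"
    using has_real_derivative_u'[of y c] y assms(1) by auto
qed

definition v :: "real \<Rightarrow> real \<Rightarrow> real" where
  "v c y = u c y + u c (1 - y)"

lemma v_one_minus: "v c (1 - y) = v c y"
  by (simp add: v_def)

lemma v_half: "v c (1/2) = 2 * F (1/2) / (c + ln 2)"
  by (simp add: v_def u_def ln_div)

lemma has_real_derivative_v:
  assumes "0 < c" "0 < y" "y < 1"
  shows "(v c has_real_derivative u' c y - u' c (1 - y)) (at y)"
proof -
  have "((\<lambda>y. u c (1 - y)) has_real_derivative u' c (1 - y) * - 1) (at y)"
    using has_real_derivative_u[of "1 - y" c] assms
    by (intro DERIV_chain2[where f = "u c"]) (auto intro!: derivative_eq_intros)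
  then show ?thesis
    unfolding v_def[abs_def] using has_real_derivative_u[of y c] assms
    by (auto intro!: derivative_eq_intros)
qed

text \<open>Where u' decreases, v' = u'(y) - u'(1 - y) is nonnegative for y \<le> 1/2.\<close>
lemma v_mono:
  assumes "0 < c" "\<And>y. 0 < y \<Longrightarrow> y < 1 \<Longrightarrow> Q c y \<le> 0" "0 < y1" "y1 \<le> y2" "y2 \<le> 1/2"
  shows "v c y1 \<le> v c y2"
proof (rule DERIV_nonneg_imp_nondecreasing[OF assms(4)])
  fix y assume "y1 \<le> y" "y \<le> y2"
  then have y: "0 < y" "y \<le> 1/2" using assms by auto
  have "u' c (1 - y) \<le> u' c y"
    using y by (intro u'_antimono[OF assms(1,2)]) auto
  then show "\<exists>D. (v c has_real_derivative D) (at y) \<and> 0 \<le> D"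
    using has_real_derivative_v[OF assms(1) y(1)] y by force
qed

lemma v_antimono:
  assumes "0 < c" "\<And>y. 0 < y \<Longrightarrow> y < 1 \<Longrightarrow> 0 \<le> Q c y" "0 < y1" "y1 \<le> y2" "y2 \<le> 1/2"
  shows "v c y2 \<le> v c y1"
proof (rule DERIV_nonpos_imp_nonincreasing[OF assms(4)])
  fix y assume "y1 \<le> y" "y \<le> y2"
  then have y: "0 < y" "y \<le> 1/2" using assms by auto
  have "u' c y \<le> u' c (1 - y)"
    using y by (intro u'_mono[OF assms(1,2)]) auto
  then show "\<exists>D. (v c has_real_derivative D) (at y) \<and> D \<le> 0"
    using has_real_derivative_v[OF assms(1) y(1)] y by force
qed

lemma u_tendsto_at_right_0:
  assumes "0 < c"
  shows "(u c \<longlongrightarrow> 1 / c) (at_right 0)"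
proof -
  have F: "isCont F 0"
    using has_real_derivative_F[of 0] by (intro DERIV_isCont) auto
  have "isCont (\<lambda>y. F y / (c - ln (1 - y))) 0"
    using assms by (intro continuous_intros F) auto
  then have "(u c \<longlongrightarrow> 1 / c) (at 0)"
    by (simp add: isCont_def u_def[abs_def])
  then show ?thesis
    by (rule tendsto_mono[OF at_le[OF subset_UNIV]])
qed

text \<open>u c (1 - y) = F (1 - y) / (c - ln y), and F (1 - y) = - L ln y + O(1).\<close>
lemma u_one_minus_tendsto_at_right_0:
  assumes "0 < c"
  shows "((\<lambda>y. u c (1 - y)) \<longlongrightarrow> L) (at_right 0)"
proof -
  obtain K where K: "\<And>x. 0 \<le> x \<Longrightarrow> x < 1 \<Longrightarrow> \<bar>F x + L * ln (1 - x)\<bar> \<le> K"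
    using F_plus_L_ln_bounded by blast
  have "filterlim (\<lambda>y. - ln y) at_top (at_right (0::real))"
    by (rule filterlim_compose[OF filterlim_uminus_at_top_at_bot ln_at_0])
  then have "filterlim (\<lambda>y. c + - ln y) at_top (at_right 0)"
    by (rule filterlim_tendsto_add_at_top[OF tendsto_const])
  then have lim: "((\<lambda>y. (K + L * \<bar>c\<bar>) / (c - ln y)) \<longlongrightarrow> 0) (at_right 0)"
    by (intro tendsto_divide_0[OF tendsto_const] filterlim_at_top_imp_at_infinity) simp
  have "eventually (\<lambda>y. 0 < y \<and> y < 1) (at_right (0::real))"
    unfolding eventually_at_right_field by (intro exI[of _ 1]) auto
  then have ev: "eventually (\<lambda>y. norm (u c (1 - y) - L) \<le> (K + L * \<bar>c\<bar>) / (c - ln y)) (at_right 0)"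
  proof (rule eventually_mono)
    fix y :: real
    assume y: "0 < y \<and> y < 1"
    then have T: "0 < c - ln y"
      using assms by (smt (verit) ln_less_zero)
    have "u c (1 - y) - L = (F (1 - y) + L * ln y - L * c) / (c - ln y)"
      using T by (simp add: u_def field_simps)
    moreover have "\<bar>F (1 - y) + L * ln y - L * c\<bar> \<le> K + L * \<bar>c\<bar>"
      using K[of "1 - y"] y L_pos abs_triangle_ineq4[of "F (1 - y) + L * ln y" "L * c"]
      by (simp add: abs_mult)
    ultimately show "norm (u c (1 - y) - L) \<le> (K + L * \<bar>c\<bar>) / (c - ln y)"
      using T by (simp add: abs_divide divide_right_mono)
  qed
  show ?thesis
    using Lim_null_comparison[OF ev lim] by (rule LIM_zero_cancel)
qed

lemma v_tendsto_at_right_0: "0 < c \<Longrightarrow> (v c \<longlongrightarrow> 1 / c + L) (at_right 0)"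
  unfolding v_def[abs_def] by (intro tendsto_add u_tendsto_at_right_0 u_one_minus_tendsto_at_right_0)

text \<open>By the symmetry y \<leftrightarrow> 1 - y it suffices to take x \<le> 1/2; the lower bound is the limit at 0.\<close>
lemma v_bounds_if_Q_nonpos:
  assumes "0 < c" "\<And>y. 0 < y \<Longrightarrow> y < 1 \<Longrightarrow> Q c y \<le> 0" "0 < x" "x < 1"
  shows "1 / c + L \<le> v c x" "v c x \<le> v c (1/2)"
proof -
  define z where "z = min x (1 - x)"
  have z: "v c x = v c z" "0 < z" "z \<le> 1/2"
    using assms v_one_minus[of c x] by (auto simp: z_def min_def)
  have "eventually (\<lambda>y. v c y \<le> v c z) (at_right 0)"
    unfolding eventually_at_right_field using z by (intro exI[of _ z]) (auto intro: v_mono[OF assms(1,2)])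
  then have "1 / c + L \<le> v c z"
    by (rule tendsto_upperbound[OF v_tendsto_at_right_0[OF assms(1)]]) simp
  moreover have "v c z \<le> v c (1/2)"
    using z by (intro v_mono[OF assms(1,2)]) auto
  ultimately show "1 / c + L \<le> v c x" "v c x \<le> v c (1/2)"
    using z by simp_all
qed

lemma v_bounds_if_Q_nonneg:
  assumes "0 < c" "\<And>y. 0 < y \<Longrightarrow> y < 1 \<Longrightarrow> 0 \<le> Q c y" "0 < x" "x < 1"
  shows "v c x \<le> 1 / c + L" "v c (1/2) \<le> v c x"
proof -
  define z where "z = min x (1 - x)"
  have z: "v c x = v c z" "0 < z" "z \<le> 1/2"
    using assms v_one_minus[of c x] by (auto simp: z_def min_def)
  have "eventually (\<lambda>y. v c z \<le> v c y) (at_right 0)"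
    unfolding eventually_at_right_field using z by (intro exI[of _ z]) (auto intro: v_antimono[OF assms(1,2)])
  then have "v c z \<le> 1 / c + L"
    by (rule tendsto_lowerbound[OF v_tendsto_at_right_0[OF assms(1)]]) simp
  moreover have "v c (1/2) \<le> v c z"
    using z by (intro v_antimono[OF assms(1,2)]) auto
  ultimately show "v c x \<le> 1 / c + L" "v c (1/2) \<le> v c x"
    using z by simp_all
qed

end

theorem corollary2:
  fixes a b c :: real
  assumes "0 < a" "a \<le> 1" "0 < b" "b \<le> 1" "a + b \<le> 1"
  shows "(c \<in> {delta_minus a b .. delta_plus a b} \<longrightarrow>
           (\<forall>x\<in>{0<..<1}.
              1/c + 1/Beta a b
                \<le> hyp2F1 a b (a+b) x / (c - ln (1-x)) + hyp2F1 a b (a+b) (1-x) / (c - ln x)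
            \<and> hyp2F1 a b (a+b) x / (c - ln (1-x)) + hyp2F1 a b (a+b) (1-x) / (c - ln x)
                \<le> 2 * hyp2F1 a b (a+b) (1/2) / (c + ln 2)))
       \<and> (c \<ge> alpha0 a b \<longrightarrow>
           (\<forall>x\<in>{0<..<1}.
              1/c + 1/Beta a b
                \<ge> hyp2F1 a b (a+b) x / (c - ln (1-x)) + hyp2F1 a b (a+b) (1-x) / (c - ln x)
            \<and> hyp2F1 a b (a+b) x / (c - ln (1-x)) + hyp2F1 a b (a+b) (1-x) / (c - ln x)
                \<ge> 2 * hyp2F1 a b (a+b) (1/2) / (c + ln 2)))"
proof -
  interpret zero_balanced a b
    using assms by unfold_locales
  have v: "hyp2F1 a b (a+b) x / (c - ln (1-x)) + hyp2F1 a b (a+b) (1-x) / (c - ln x) = v c x" for x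
    by (simp add: v_def u_def)
  have concave: "1/c + L \<le> v c x \<and> v c x \<le> v c (1/2)"
    if c: "c \<in> {delta_minus a b .. delta_plus a b}" and x: "x \<in> {0<..<1}" for x
  proof -
    have "0 < c"
      using phi_minus_0_pos phi_minus_le_delta_minus[of 0] c by auto
    moreover have "Q c y \<le> 0" if "0 < y" "y < 1" for y
      using that c phi_minus_le_delta_minus[of y] delta_plus_le_phi_plus[of y] by (intro Q_nonpos) auto
    ultimately show ?thesis
      using v_bounds_if_Q_nonpos x by auto
  qed
  have convex: "v c x \<le> 1/c + L \<and> v c (1/2) \<le> v c x"
    if c: "alpha0 a b \<le> c" and x: "x \<in> {0<..<1}" for x
  proof -
    have "0 < c"
      using phi_plus_0_pos phi_plus_le_alpha0[of 0] c by auto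
    moreover have "0 \<le> Q c y" if "0 < y" "y < 1" for y
      using that c phi_plus_le_alpha0[of y] by (intro Q_nonneg) auto
    ultimately show ?thesis
      using v_bounds_if_Q_nonneg x by auto
  qed
  show ?thesis
    unfolding v v_half[symmetric] L_def[symmetric] using concave convex by blast
qed

end
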